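(* Let $\xi:\mathbb{R}\to\mathbb{R}^3$ be a smooth, $L$-periodic, arclength-parametrized curve with curvature $k>0$ and torsion $\tau$. Let $\alpha:\mathbb{R}\to\mathbb{R}$ satisfy $\alpha'=\tau$, and let $J=\{t:\cos\alpha(t)\neq0\}$. Let $\eta(t)=\xi(t)+r(t)\mathbf{n}(t)-r(t)\tan\alpha(t)\,\mathbf{b}(t)$ for $t\in J$ be the corresponding Monge evolute. Then: (i) $J+L=J$ and $\eta(t+L)=\eta(t)$ for all $t\in J$ if and only if $\int_0^L\tau\,dt\in\pi\mathbb{Z}$. (ii) In particular, this holds if $\xi$ is centrally symmetric. Here this means that there exist $c\in\mathbb{R}^3$ and $t_1\in\mathbb{R}$ such that either $\xi(t+t_1)=2c-\xi(t)$ for all $t$, or $\xi(t_1-t)=2c-\xi(t)$ for all $t$; in these cases $\int_0^L\tau\,dt=0$.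
   Context: $r=1/k$, and $(\mathbf{t},\mathbf{n},\mathbf{b})$ is the Frenet frame of $\xi$. A Monge evolute of $\xi$ is a curve $\eta=\xi+y\mathbf{n}+z\mathbf{b}$ with $\eta'$ parallel to $\eta-\xi$. These are exactly the curves $\xi+r\mathbf{n}-r\tan\alpha\,\mathbf{b}$ with $\alpha'=\tau$. *)

theory Defs
  imports "HOL-Analysis.Analysis"
begin

definition vderiv :: "(real \<Rightarrow> real^3) \<Rightarrow> real \<Rightarrow> real^3" where
  "vderiv f = (\<lambda>t. vector_derivative f (at t))"

definition smooth_curve :: "(real \<Rightarrow> real^3) \<Rightarrow> bool" where
  "smooth_curve \<xi> \<longleftrightarrow> (\<forall>m t. ((vderiv ^^ m) \<xi>) differentiable (at t))"

definition tangent :: "(real \<Rightarrow> real^3) \<Rightarrow> real \<Rightarrow> real^3" where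
  "tangent \<xi> = vderiv \<xi>"

definition curvature :: "(real \<Rightarrow> real^3) \<Rightarrow> real \<Rightarrow> real" where
  "curvature \<xi> t = norm (vderiv (vderiv \<xi>) t)"

definition radius :: "(real \<Rightarrow> real^3) \<Rightarrow> real \<Rightarrow> real" where
  "radius \<xi> t = 1 / curvature \<xi> t"

definition normal :: "(real \<Rightarrow> real^3) \<Rightarrow> real \<Rightarrow> real^3" where
  "normal \<xi> t = (1 / curvature \<xi> t) *\<^sub>R vderiv (vderiv \<xi>) t"

definition binormal :: "(real \<Rightarrow> real^3) \<Rightarrow> real \<Rightarrow> real^3" where
  "binormal \<xi> t = cross3 (tangent \<xi> t) (normal \<xi> t)"

(* Frenet: n' = -k t + tau b, so tau = <n', b> *)
definition torsion :: "(real \<Rightarrow> real^3) \<Rightarrow> real \<Rightarrow> real" where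
  "torsion \<xi> t = inner (vderiv (normal \<xi>) t) (binormal \<xi> t)"

definition monge_evolute :: "(real \<Rightarrow> real^3) \<Rightarrow> (real \<Rightarrow> real) \<Rightarrow> real \<Rightarrow> real^3" where
  "monge_evolute \<xi> \<alpha> t = \<xi> t + radius \<xi> t *\<^sub>R normal \<xi> t
      - (radius \<xi> t * tan (\<alpha> t)) *\<^sub>R binormal \<xi> t"

definition evolute_domain :: "(real \<Rightarrow> real) \<Rightarrow> real set" where
  "evolute_domain \<alpha> = {t. cos (\<alpha> t) \<noteq> 0}"

definition centrally_symmetric :: "(real \<Rightarrow> real^3) \<Rightarrow> bool" where
  "centrally_symmetric \<xi> \<longleftrightarrow> (\<exists>c t1.
      (\<forall>t. \<xi> (t + t1) = 2 *\<^sub>R c - \<xi> t) \<or> (\<forall>t. \<xi> (t1 - t) = 2 *\<^sub>R c - \<xi> t))"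

end

theory Submission
  imports Defs
begin

text \<open>
  Under a reparametrization \<open>\<xi> u = a + \<sigma> \<xi> (e u + d)\<close> with \<open>\<sigma>, e \<in> {1, -1}\<close> (a translation
  in time, possibly reversed, composed with a point reflection) the Frenet apparatus transforms
  by signs, and the torsion satisfies \<open>\<tau> u = \<sigma> \<tau> (e u + d)\<close>. Hence an antiderivative \<open>\<alpha>\<close> of
  \<open>\<tau>\<close> obeys \<open>\<alpha> (e u + d) = \<sigma> e \<alpha> u + const\<close>. For the period shift this gives
  \<open>\<alpha> (t + L) = \<alpha> t + I\<close> with \<open>I = \<integral>\<^sub>0\<^sup>L \<tau>\<close>, while the frame is \<open>L\<close>-periodic; so the evolute is
  periodic iff \<open>tan \<alpha>\<close> and the zero set of \<open>cos \<alpha>\<close> are invariant under adding \<open>I\<close> to \<open>\<alpha>\<close>, i.e.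
  iff \<open>I \<in> \<pi>\<int>\<close>. For a central symmetry \<open>\<sigma> = -1\<close>, and comparing the two relations for \<open>\<alpha>\<close>
  forces \<open>I = 0\<close>.
\<close>

lemma vderiv_affine_reparam:
  fixes f :: "real \<Rightarrow> real^3"
  assumes "f differentiable (at (e * x + d))" and "\<And>u. g u = a + \<sigma> *\<^sub>R f (e * u + d)"
  shows "vderiv g x = (\<sigma> * e) *\<^sub>R vderiv f (e * x + d)"
proof -
  have f: "(f has_vector_derivative vderiv f (e * x + d)) (at (e * x + d))"
    using assms(1) vector_derivative_works unfolding vderiv_def by blast
  have "((\<lambda>u. e * u + d) has_vector_derivative e) (at x)"
    unfolding has_real_derivative_iff_has_vector_derivative[symmetric]
    by (auto intro!: derivative_eq_intros)
  then have "((f \<circ> (\<lambda>u. e * u + d)) has_vector_derivative (e *\<^sub>R vderiv f (e * x + d))) (at x)"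
    by (rule vector_diff_chain_at) (simp add: f)
  then have "(g has_vector_derivative ((\<sigma> * e) *\<^sub>R vderiv f (e * x + d))) (at x)"
    unfolding assms(2)[abs_def] by (auto intro!: derivative_eq_intros simp: o_def)
  then show ?thesis
    unfolding vderiv_def using vector_derivative_at by blast
qed

lemma smooth_curve_differentiable:
  assumes "smooth_curve \<xi>"
  shows "\<xi> differentiable (at t)" "vderiv \<xi> differentiable (at t)"
    and "vderiv (vderiv \<xi>) differentiable (at t)"
proof -
  have "(vderiv ^^ 0) \<xi> = \<xi>" "(vderiv ^^ 1) \<xi> = vderiv \<xi>"
    "(vderiv ^^ 2) \<xi> = vderiv (vderiv \<xi>)"
    by (simp_all add: numeral_2_eq_2)
  then show "\<xi> differentiable (at t)" "vderiv \<xi> differentiable (at t)"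
    "vderiv (vderiv \<xi>) differentiable (at t)"
    using assms unfolding smooth_curve_def by metis+
qed

lemma normal_differentiable:
  assumes "vderiv (vderiv \<xi>) differentiable (at t)" and "curvature \<xi> t > 0"
  shows "normal \<xi> differentiable (at t)"
proof -
  have nz: "vderiv (vderiv \<xi>) t \<noteq> 0"
    using assms(2) unfolding curvature_def by auto
  have "(\<lambda>t. norm (vderiv (vderiv \<xi>) t)) differentiable (at t)"
    using differentiable_compose[of norm "vderiv (vderiv \<xi>)" t] assms(1) nz by (auto simp: o_def)
  then have "(\<lambda>t. 1 / norm (vderiv (vderiv \<xi>) t)) differentiable (at t)"
    using nz by (auto intro!: derivative_intros)
  then show ?thesis
    unfolding normal_def[abs_def] curvature_def using assms(1) by (auto intro!: derivative_intros)
qed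

lemma frenet_apparatus_affine_reparam:
  assumes smooth: "smooth_curve \<xi>" and curv: "\<forall>t. curvature \<xi> t > 0"
    and reparam: "\<forall>u. \<xi> u = a + \<sigma> *\<^sub>R \<xi> (e * u + d)"
    and sign_\<sigma>: "\<sigma> = 1 \<or> \<sigma> = -1" and sign_e: "e = 1 \<or> e = -1"
  shows "torsion \<xi> x = \<sigma> * torsion \<xi> (e * x + d)"
    and "normal \<xi> x = \<sigma> *\<^sub>R normal \<xi> (e * x + d)"
    and "binormal \<xi> x = e *\<^sub>R binormal \<xi> (e * x + d)"
    and "radius \<xi> x = radius \<xi> (e * x + d)"
proof -
  note diff = smooth_curve_differentiable[OF smooth]
  have \<sigma>\<sigma>: "\<sigma> * \<sigma> = 1" and ee: "e * e = 1"
    using sign_\<sigma> sign_e by auto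
  note T = vderiv_affine_reparam[OF diff(1) reparam[rule_format]]
  have T': "vderiv (vderiv \<xi>) y = \<sigma> *\<^sub>R vderiv (vderiv \<xi>) (e * y + d)" for y
    using vderiv_affine_reparam[OF diff(2), of "vderiv \<xi>" 0, simplified, OF T, of y] ee
    by (simp add: mult.assoc)
  have K: "curvature \<xi> y = curvature \<xi> (e * y + d)" for y
    unfolding curvature_def using T'[of y] sign_\<sigma> by auto
  have N: "normal \<xi> y = \<sigma> *\<^sub>R normal \<xi> (e * y + d)" for y
    unfolding normal_def using K[of y] T'[of y] by (simp add: algebra_simps)
  note N' = vderiv_affine_reparam[OF normal_differentiable[OF diff(3) curv[rule_format]],
      of "normal \<xi>" 0, simplified, OF N]
  have B: "binormal \<xi> y = e *\<^sub>R binormal \<xi> (e * y + d)" for y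
  proof -
    have "binormal \<xi> y = ((\<sigma> * e) * \<sigma>) *\<^sub>R binormal \<xi> (e * y + d)"
      unfolding binormal_def tangent_def using T[of y] N[of y]
      by (simp add: cross_mult_left cross_mult_right)
    then show ?thesis
      using \<sigma>\<sigma> by (simp add: mult.commute mult.left_commute)
  qed
  have "torsion \<xi> x = ((\<sigma> * e) * e) * torsion \<xi> (e * x + d)"
    unfolding torsion_def using N'[of x] B[of x] by (simp add: algebra_simps)
  then show "torsion \<xi> x = \<sigma> * torsion \<xi> (e * x + d)"
    using ee by (simp add: mult.assoc)
  show "normal \<xi> x = \<sigma> *\<^sub>R normal \<xi> (e * x + d)" "binormal \<xi> x = e *\<^sub>R binormal \<xi> (e * x + d)"
    using N B by blast+
  show "radius \<xi> x = radius \<xi> (e * x + d)"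
    unfolding radius_def using K[of x] by simp
qed

lemma norm_binormal:
  assumes "vderiv \<xi> differentiable (at t)" and "curvature \<xi> t > 0"
    and unit_speed: "\<forall>t. norm (vderiv \<xi> t) = 1"
  shows "norm (binormal \<xi> t) = 1"
proof -
  let ?T = "vderiv \<xi>" and ?T' = "vderiv (vderiv \<xi>) t"
  have "(?T has_vector_derivative ?T') (at t)"
    using assms(1) vector_derivative_works unfolding vderiv_def by blast
  then have "((\<lambda>u. ?T u \<bullet> ?T u) has_vector_derivative (?T t \<bullet> ?T' + ?T' \<bullet> ?T t)) (at t)"
    using bounded_bilinear.has_vector_derivative[OF bounded_bilinear_inner] by blast
  moreover have "(\<lambda>u. ?T u \<bullet> ?T u) = (\<lambda>u. 1)"
    using unit_speed by (simp add: fun_eq_iff power2_norm_eq_inner[symmetric])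
  ultimately have "((\<lambda>_. 1::real) has_real_derivative (?T t \<bullet> ?T' + ?T' \<bullet> ?T t)) (at t)"
    by (simp add: has_real_derivative_iff_has_vector_derivative)
  then have "?T t \<bullet> ?T' + ?T' \<bullet> ?T t = 0"
    using DERIV_const DERIV_unique by blast
  then have "?T t \<bullet> normal \<xi> t = 0"
    unfolding normal_def by (simp add: inner_commute)
  moreover have "norm (normal \<xi> t) = 1"
    using assms(2) unfolding normal_def curvature_def by simp
  ultimately have "(norm (binormal \<xi> t))\<^sup>2 = 1"
    using norm_cross_dot[of "?T t" "normal \<xi> t"] unit_speed
    unfolding binormal_def tangent_def by simp
  then show ?thesis
    using norm_ge_zero[of "binormal \<xi> t"] by (simp add: power2_eq_1_iff)
qed

lemma antiderivative_affine_reparam: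
  assumes deriv: "\<forall>t. (\<alpha> has_real_derivative f t) (at t)"
    and reparam: "\<forall>x. e * f (e * x + d) = c * f x"
  shows "\<alpha> (e * y + d) - c * \<alpha> y = \<alpha> (e * z + d) - c * \<alpha> z"
proof -
  have "((\<lambda>u. \<alpha> (e * u + d) - c * \<alpha> u) has_real_derivative 0) (at x)" for x
  proof -
    have "((\<lambda>u. e * u + d) has_real_derivative e) (at x)"
      by (auto intro!: derivative_eq_intros)
    then have "((\<lambda>u. \<alpha> (e * u + d)) has_real_derivative f (e * x + d) * e) (at x)"
      using DERIV_chain2 deriv by blast
    then have "((\<lambda>u. \<alpha> (e * u + d) - c * \<alpha> u) has_real_derivative
                 f (e * x + d) * e - c * f x) (at x)"
      using DERIV_cmult[OF deriv[rule_format, of x], of c] by (intro DERIV_diff)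
    then show ?thesis
      using reparam by (simp add: mult.commute)
  qed
  then show ?thesis
    using DERIV_isconst_all by blast
qed

lemma tan_shift_invariant_iff:
  assumes shift: "\<forall>t. \<alpha> (t + L) = \<alpha> t + I"
  shows "((\<lambda>t. t + L) ` evolute_domain \<alpha> = evolute_domain \<alpha> \<and>
            (\<forall>t\<in>evolute_domain \<alpha>. tan (\<alpha> (t + L)) = tan (\<alpha> t)))
         \<longleftrightarrow> (\<exists>m::int. I = pi * of_int m)"
proof
  assume inv: "(\<lambda>t. t + L) ` evolute_domain \<alpha> = evolute_domain \<alpha> \<and>
               (\<forall>t\<in>evolute_domain \<alpha>. tan (\<alpha> (t + L)) = tan (\<alpha> t))"
  have "sin I = 0"
  proof (cases "evolute_domain \<alpha> = {}")
    case True
    then have "cos (\<alpha> 0) = 0" "cos (\<alpha> (0 + L)) = 0"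
      unfolding evolute_domain_def by auto
    then have "sin (\<alpha> (0 + L) - \<alpha> 0) = 0"
      by (simp add: sin_diff)
    then show ?thesis
      using shift[rule_format, of 0] by simp
  next
    case False
    then obtain t where t: "t \<in> evolute_domain \<alpha>"
      by blast
    have "t + L \<in> evolute_domain \<alpha>"
      using inv t by blast
    then have "cos (\<alpha> t + I) \<noteq> 0"
      using shift unfolding evolute_domain_def by simp
    moreover have "cos (\<alpha> t) \<noteq> 0"
      using t unfolding evolute_domain_def by simp
    moreover have "tan (\<alpha> (t + L)) = tan (\<alpha> t)"
      using inv t by blast
    then have "tan (\<alpha> t + I) = tan (\<alpha> t)"
      using shift by simp
    ultimately have "sin (\<alpha> t + I) * cos (\<alpha> t) - cos (\<alpha> t + I) * sin (\<alpha> t) = 0"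
      by (simp add: tan_def field_simps)
    then show ?thesis
      using sin_diff[of "\<alpha> t + I" "\<alpha> t"] by simp
  qed
  then show "\<exists>m::int. I = pi * of_int m"
    using sin_zero_iff_int2 by (metis mult.commute)
next
  assume "\<exists>m::int. I = pi * of_int m"
  then obtain m :: int where m: "I = pi * of_int m"
    by blast
  have "sin I = 0"
    using m sin_zero_iff_int2 by (metis mult.commute)
  then have "cos I \<noteq> 0"
    using sin_cos_squared_add[of I] by auto
  then have J: "t + L \<in> evolute_domain \<alpha> \<longleftrightarrow> t \<in> evolute_domain \<alpha>" for t
    using shift \<open>sin I = 0\<close> unfolding evolute_domain_def by (simp add: cos_add)
  have "(\<lambda>t. t + L) ` evolute_domain \<alpha> = evolute_domain \<alpha>"
  proof (intro set_eqI iffI)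
    fix y
    assume "y \<in> evolute_domain \<alpha>"
    then show "y \<in> (\<lambda>t. t + L) ` evolute_domain \<alpha>"
      using J[of "y - L"] by (intro rev_image_eqI[of "y - L"]) auto
  qed (use J in auto)
  moreover have "tan (\<alpha> (t + L)) = tan (\<alpha> t)" for t
    using tan_periodic_int[of "\<alpha> t" m] shift m by (simp add: mult.commute)
  ultimately show "(\<lambda>t. t + L) ` evolute_domain \<alpha> = evolute_domain \<alpha> \<and>
                   (\<forall>t\<in>evolute_domain \<alpha>. tan (\<alpha> (t + L)) = tan (\<alpha> t))"
    by blast
qed

context
  fixes \<xi> :: "real \<Rightarrow> real^3" and L :: real and \<alpha> :: "real \<Rightarrow> real"
  assumes smooth: "smooth_curve \<xi>" and periodic: "\<forall>t. \<xi> (t + L) = \<xi> t"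
    and curv: "\<forall>t. curvature \<xi> t > 0"
    and alpha_deriv: "\<forall>t. (\<alpha> has_real_derivative torsion \<xi> t) (at t)"
begin

lemma frenet_apparatus_periodic:
  shows "torsion \<xi> (t + L) = torsion \<xi> t" and "normal \<xi> (t + L) = normal \<xi> t"
    and "binormal \<xi> (t + L) = binormal \<xi> t" and "radius \<xi> (t + L) = radius \<xi> t"
  using frenet_apparatus_affine_reparam[OF smooth curv, of 0 1 1 L t] periodic
  by (simp_all add: add.commute)

lemma torsion_antiderivative_shift: "\<alpha> (t + L) = \<alpha> t + (\<alpha> L - \<alpha> 0)"
  using antiderivative_affine_reparam[OF alpha_deriv, of 1 L 1 t 0] frenet_apparatus_periodic(1)
  by simp

lemma monge_evolute_periodic_iff_tan_periodic:
  assumes unit_speed: "\<forall>t. norm (vderiv \<xi> t) = 1"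
  shows "monge_evolute \<xi> \<alpha> (t + L) = monge_evolute \<xi> \<alpha> t \<longleftrightarrow> tan (\<alpha> (t + L)) = tan (\<alpha> t)"
proof -
  have "binormal \<xi> t \<noteq> 0"
    using norm_binormal[OF smooth_curve_differentiable(2)[OF smooth] curv[rule_format] unit_speed]
    by (metis norm_zero zero_neq_one)
  moreover have "radius \<xi> t \<noteq> 0"
    unfolding radius_def using curv by (simp add: less_imp_neq[symmetric])
  ultimately show ?thesis
    unfolding monge_evolute_def using frenet_apparatus_periodic periodic by simp
qed

lemma centrally_symmetric_torsion_increment_zero:
  assumes "centrally_symmetric \<xi>"
  shows "\<alpha> L = \<alpha> 0"
proof -
  obtain c t1 where "(\<forall>t. \<xi> (t + t1) = 2 *\<^sub>R c - \<xi> t) \<or> (\<forall>t. \<xi> (t1 - t) = 2 *\<^sub>R c - \<xi> t)"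
    using assms unfolding centrally_symmetric_def by blast
  then show ?thesis
  proof
    assume half_turn: "\<forall>t. \<xi> (t + t1) = 2 *\<^sub>R c - \<xi> t"
    have "\<forall>u. \<xi> u = 2 *\<^sub>R c + (-1) *\<^sub>R \<xi> (1 * u + (- t1))"
    proof
      fix u
      show "\<xi> u = 2 *\<^sub>R c + (-1) *\<^sub>R \<xi> (1 * u + (- t1))"
        using half_turn[rule_format, of "u - t1"] by simp
    qed
    note tor = frenet_apparatus_affine_reparam(1)[OF smooth curv this]
    have "\<forall>x. 1 * torsion \<xi> (1 * x + - t1) = (-1) * torsion \<xi> x"
    proof
      fix x
      show "1 * torsion \<xi> (1 * x + - t1) = (-1) * torsion \<xi> x"
        using tor[of x] by simp
    qed
    from antiderivative_affine_reparam[OF alpha_deriv this, of L 0]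
    have "\<alpha> (L - t1) + \<alpha> L = \<alpha> (- t1) + \<alpha> 0"
      by simp
    then show ?thesis
      using torsion_antiderivative_shift[of "- t1"] by simp
  next
    assume reflection: "\<forall>t. \<xi> (t1 - t) = 2 *\<^sub>R c - \<xi> t"
    have "\<forall>u. \<xi> u = 2 *\<^sub>R c + (-1) *\<^sub>R \<xi> ((-1) * u + t1)"
      using reflection by simp
    note tor = frenet_apparatus_affine_reparam(1)[OF smooth curv this]
    have "\<forall>x. (-1) * torsion \<xi> ((-1) * x + t1) = 1 * torsion \<xi> x"
    proof
      fix x
      show "(-1) * torsion \<xi> ((-1) * x + t1) = 1 * torsion \<xi> x"
        using tor[of x] by simp
    qed
    from antiderivative_affine_reparam[OF alpha_deriv this, of L 0]
    have "\<alpha> (t1 - L) - \<alpha> L = \<alpha> t1 - \<alpha> 0"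
      by simp
    then show ?thesis
      using torsion_antiderivative_shift[of "t1 - L"] by simp
  qed
qed

end

theorem mainTheorem16:
  fixes \<xi> :: "real \<Rightarrow> real^3" and L :: real and \<alpha> :: "real \<Rightarrow> real"
  assumes "L > 0"
    and "smooth_curve \<xi>"
    and "\<forall>t. \<xi> (t + L) = \<xi> t"
    and "\<forall>t. norm (vderiv \<xi> t) = 1"
    and "\<forall>t. curvature \<xi> t > 0"
    and "\<forall>t. (\<alpha> has_real_derivative torsion \<xi> t) (at t)"
  shows "(((\<lambda>t. t + L) ` evolute_domain \<alpha> = evolute_domain \<alpha> \<and>
            (\<forall>t\<in>evolute_domain \<alpha>. monge_evolute \<xi> \<alpha> (t + L) = monge_evolute \<xi> \<alpha> t))
          \<longleftrightarrow> (\<exists>m::int. integral {0..L} (torsion \<xi>) = pi * of_int m))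
       \<and> (centrally_symmetric \<xi> \<longrightarrow>
            integral {0..L} (torsion \<xi>) = 0 \<and>
            (\<lambda>t. t + L) ` evolute_domain \<alpha> = evolute_domain \<alpha> \<and>
            (\<forall>t\<in>evolute_domain \<alpha>. monge_evolute \<xi> \<alpha> (t + L) = monge_evolute \<xi> \<alpha> t))"
proof -
  have "(torsion \<xi> has_integral (\<alpha> L - \<alpha> 0)) {0..L}"
    using assms(1,6) by (intro fundamental_theorem_of_calculus)
      (auto simp: has_real_derivative_iff_has_vector_derivative[symmetric] intro: DERIV_subset)
  then have integral: "integral {0..L} (torsion \<xi>) = \<alpha> L - \<alpha> 0"
    by (rule integral_unique)
  have shift: "\<forall>t. \<alpha> (t + L) = \<alpha> t + (\<alpha> L - \<alpha> 0)"
    using torsion_antiderivative_shift[OF assms(2,3,5,6)] by blast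
  have evolute_iff:
    "((\<lambda>t. t + L) ` evolute_domain \<alpha> = evolute_domain \<alpha> \<and>
       (\<forall>t\<in>evolute_domain \<alpha>. monge_evolute \<xi> \<alpha> (t + L) = monge_evolute \<xi> \<alpha> t))
     \<longleftrightarrow> (\<exists>m::int. \<alpha> L - \<alpha> 0 = pi * of_int m)"
    using monge_evolute_periodic_iff_tan_periodic[OF assms(2,3,5,6,4)]
      tan_shift_invariant_iff[OF shift]
    by simp
  have "\<alpha> L - \<alpha> 0 = pi * of_int (0::int)" if "centrally_symmetric \<xi>"
    using centrally_symmetric_torsion_increment_zero[OF assms(2,3,5,6) that] by simp
  then show ?thesis
    unfolding integral evolute_iff by auto
qed

end
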